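(* Let $\alpha>0$ and let $\Lambda=\{\lambda(n)\}_{n\in\mathbb{Z}}$ be a strictly increasing sequence of real numbers such that $\lambda(n)=n+O(|n|^{-\alpha})$ as $|n|\to\infty$. Then $\Lambda$ is not a Menshov spectrum for $\mathbb{R}$.
   Context: A sequence $\Lambda=\{\lambda(k)\}_{k\in\mathbb{Z}}$ of real numbers with $\dots<\lambda(-1)<\lambda(0)<\lambda(1)<\dots$ is called a Menshov spectrum for $\mathbb{R}$ if for every measurable (complex-valued, a.e. finite) function $f$ on $\mathbb{R}$ there are coefficients $\{c(k)\}$ such that $f(t)=\sum_{k\in\mathbb{Z}}c(k)e^{i\lambda(k)t}$ almost everywhere, where convergence of the series is understood as the limit of the symmetric partial sums $\lim_{x\to\infty}\sum_{|\lambda(k)|<x}c(k)e^{i\lambda(k)t}$. *)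

theory Defs
  imports "HOL-Analysis.Analysis"
begin

definition menshov_spectrum :: "(int \<Rightarrow> real) \<Rightarrow> bool" where
  "menshov_spectrum lam \<longleftrightarrow>
     (\<forall>f :: real \<Rightarrow> complex. f \<in> borel_measurable lebesgue \<longrightarrow>
        (\<exists>c :: int \<Rightarrow> complex.
           AE t in lebesgue.
             ((\<lambda>x::real. \<Sum>k\<in>{k. \<bar>lam k\<bar> < x}. c k * exp (\<i> * complex_of_real (lam k * t)))
                \<longlongrightarrow> f t) at_top))"

end

theory Submission
  imports Defs
begin

text \<open>Suppose \<open>exp s\<close> is almost everywhere the limit of the symmetric partial sums \<open>S x s\<close> of
  \<open>\<Sum> c\<^sub>k exp (i \<lambda>\<^sub>k s)\<close>, and pick \<open>t\<close> such that \<open>S x\<close> converges at every point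
  \<open>t + 2\<pi>n\<close>. The second difference \<open>\<Delta>\<^sub>a g s = g (s + a) + g (s - a) - 2 g s\<close> with step
  \<open>a = 2\<pi>h\<close> only samples these points. It multiplies \<open>exp s\<close> by \<open>2 cosh a - 2\<close> and
  \<open>exp (i \<lambda> s)\<close> by \<open>2 cos (a \<lambda>) - 2\<close>, which is at most \<open>a\<^sup>2 (\<lambda> - k)\<^sup>2\<close> in modulus
  for every integer \<open>k\<close>. As \<open>S x t\<close> is bounded in \<open>x\<close> and the multipliers depend on
  \<open>|\<lambda>\<^sub>k|\<close> only, \<open>\<Delta>\<^sub>a\<^sup>J (S x) t\<close> is bounded by a constant times
  \<open>a^(2J) \<Sum> (\<lambda>\<^sub>k - k)^(2J)\<close>, a finite sum once \<open>2\<alpha>J > 1\<close>. In the limit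
  \<open>(2 cosh a - 2)\<^sup>J exp t = O(a^(2J))\<close>, which is false for large \<open>h\<close>.\<close>

definition second_difference :: "real \<Rightarrow> (real \<Rightarrow> 'a::real_normed_vector) \<Rightarrow> real \<Rightarrow> 'a" where
  "second_difference a g s = g (s + a) + g (s - a) - 2 *\<^sub>R g s"

lemma second_difference_scaleR:
  "second_difference a (\<lambda>s. c *\<^sub>R g s) = (\<lambda>s. c *\<^sub>R second_difference a g s)"
  by (simp add: second_difference_def fun_eq_iff algebra_simps)

lemma second_difference_sum:
  "second_difference a (\<lambda>s. \<Sum>k\<in>F. u k s) = (\<lambda>s. \<Sum>k\<in>F. second_difference a (u k) s)"
  by (simp add: second_difference_def fun_eq_iff sum.distrib sum_subtractf scaleR_sum_right)

lemma iterated_second_difference_eigenfunction: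
  assumes "second_difference a g = (\<lambda>s. \<kappa> *\<^sub>R g s)"
  shows "(second_difference a ^^ j) g = (\<lambda>s. (\<kappa> ^ j) *\<^sub>R g s)"
  by (induction j) (simp_all add: second_difference_scaleR assms mult.commute)

lemma iterated_second_difference_sum:
  "(second_difference a ^^ j) (\<lambda>s. \<Sum>k\<in>F. u k s) = (\<lambda>s. \<Sum>k\<in>F. (second_difference a ^^ j) (u k) s)"
  by (induction j) (simp_all add: second_difference_sum)

lemma tendsto_iterated_second_difference:
  assumes "\<And>n::int. ((\<lambda>x. G x (t + of_int n * a)) \<longlongrightarrow> g (t + of_int n * a)) F"
  shows "((\<lambda>x. (second_difference a ^^ j) (G x) (t + of_int n * a))
           \<longlongrightarrow> (second_difference a ^^ j) g (t + of_int n * a)) F"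
proof (induction j arbitrary: n)
  case 0
  then show ?case using assms by simp
next
  case (Suc j)
  have step: "(second_difference a ^^ Suc j) H s
      = (second_difference a ^^ j) H (s + a) + (second_difference a ^^ j) H (s - a)
        - 2 *\<^sub>R (second_difference a ^^ j) H s" for H s
    by (simp add: second_difference_def)
  have shift: "t + of_int (n + 1) * a = t + of_int n * a + a"
    "t + of_int (n - 1) * a = t + of_int n * a - a"
    by (simp_all add: algebra_simps)
  show ?case
    unfolding step
    by (intro tendsto_intros Suc[of "n + 1", unfolded shift] Suc[of "n - 1", unfolded shift] Suc[of n])
qed

lemma second_difference_exp_imaginary:
  "second_difference a (\<lambda>s. c * exp (\<i> * complex_of_real (l * s)))
     = (\<lambda>s. (2 * cos (a * l) - 2) *\<^sub>R (c * exp (\<i> * complex_of_real (l * s))))"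
proof
  fix s
  define w where "w = \<i> * complex_of_real (a * l)"
  define z where "z = c * exp (\<i> * complex_of_real (l * s))"
  have "exp w + exp (- w) = 2 * complex_of_real (cos (a * l))"
    using cos_exp_eq[of "complex_of_real (a * l)"] unfolding w_def cos_of_real by (simp add: mult.commute)
  moreover have "c * exp (\<i> * complex_of_real (l * (s + a))) = z * exp w"
    "c * exp (\<i> * complex_of_real (l * (s - a))) = z * exp (- w)"
    unfolding w_def z_def by (simp_all add: algebra_simps flip: exp_add)
  ultimately have "c * exp (\<i> * complex_of_real (l * (s + a))) + c * exp (\<i> * complex_of_real (l * (s - a)))
      - 2 *\<^sub>R z = (2 * cos (a * l) - 2) *\<^sub>R z"
    by (simp add: scaleR_diff_left) (simp add: scaleR_conv_of_real mult.commute flip: distrib_left)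
  then show "second_difference a (\<lambda>s. c * exp (\<i> * complex_of_real (l * s))) s
     = (2 * cos (a * l) - 2) *\<^sub>R (c * exp (\<i> * complex_of_real (l * s)))"
    unfolding second_difference_def z_def .
qed

lemma second_difference_exp:
  "second_difference a (\<lambda>s. of_real (exp s) :: 'a::real_normed_algebra_1)
     = (\<lambda>s. (2 * cosh a - 2) *\<^sub>R of_real (exp s))"
proof
  fix s
  have "exp (s + a) + exp (s - a) - 2 * exp s = (2 * cosh a - 2) * exp s"
    by (simp add: cosh_def exp_add exp_diff exp_minus field_simps)
  then have "(of_real (exp (s + a) + exp (s - a) - 2 * exp s) :: 'a) = of_real ((2 * cosh a - 2) * exp s)"
    by simp
  then show "second_difference a (\<lambda>s. of_real (exp s) :: 'a) s = (2 * cosh a - 2) *\<^sub>R of_real (exp s)"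
    by (simp add: second_difference_def scaleR_conv_of_real)
qed

lemma partial_sums_bounded:
  fixes \<mu> :: "'i \<Rightarrow> real" and w :: "'i \<Rightarrow> 'a::real_normed_vector"
  assumes fin: "\<And>x. finite {k. \<mu> k < x}"
    and lim: "((\<lambda>x. \<Sum>k\<in>{k. \<mu> k < x}. w k) \<longlongrightarrow> L) at_top"
  obtains R where "\<And>x. norm (\<Sum>k\<in>{k. \<mu> k < x}. w k) \<le> R"
proof -
  from lim have "eventually (\<lambda>x. dist (\<Sum>k\<in>{k. \<mu> k < x}. w k) L < 1) at_top"
    by (simp add: tendsto_iff)
  then obtain X where X: "\<And>x. x \<ge> X \<Longrightarrow> dist (\<Sum>k\<in>{k. \<mu> k < x}. w k) L < 1"
    by (auto simp: eventually_at_top_linorder)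
  have "norm (\<Sum>k\<in>{k. \<mu> k < x}. w k) \<le> norm L + 1 + (\<Sum>k\<in>{k. \<mu> k < X}. norm (w k))" for x
  proof (cases "x \<ge> X")
    case True
    then have "norm (\<Sum>k\<in>{k. \<mu> k < x}. w k) \<le> norm L + 1"
      using X[of x] norm_triangle_sub[of "\<Sum>k\<in>{k. \<mu> k < x}. w k" L] by (simp add: dist_norm)
    moreover have "0 \<le> (\<Sum>k\<in>{k. \<mu> k < X}. norm (w k))" by (simp add: sum_nonneg)
    ultimately show ?thesis by linarith
  next
    case False
    then have "norm (\<Sum>k\<in>{k. \<mu> k < x}. w k) \<le> (\<Sum>k\<in>{k. \<mu> k < X}. norm (w k))"
      by (intro order_trans[OF norm_sum] sum_mono2[OF fin]) auto
    then show ?thesis using norm_ge_zero[of L] by linarith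
  qed
  then show thesis by (rule that)
qed

lemma norm_sum_level_set_le:
  fixes \<mu> :: "'i \<Rightarrow> real" and w :: "'i \<Rightarrow> 'a::real_normed_vector"
  assumes fin: "\<And>x. finite {k. \<mu> k < x}"
    and bdd: "\<And>x. norm (\<Sum>k\<in>{k. \<mu> k < x}. w k) \<le> R"
  shows "norm (\<Sum>k\<in>{k. \<mu> k = m}. w k) \<le> 2 * R"
proof -
  define V where "V = \<mu> ` {k. \<mu> k < m + 1} \<inter> {m<..}"
  have "finite V" using fin unfolding V_def by simp
  define y where "y = Min (insert (m + 1) V)"
  have "m < y" "y \<le> m + 1"
    using \<open>finite V\<close> by (auto simp: y_def V_def)
  have "{k. \<mu> k < y} = {k. \<mu> k \<le> m}"
  proof (intro set_eqI iffI; simp)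
    fix k assume "\<mu> k < y"
    show "\<mu> k \<le> m"
    proof (rule ccontr)
      assume "\<not> \<mu> k \<le> m"
      then have "\<mu> k \<in> V" using \<open>\<mu> k < y\<close> \<open>y \<le> m + 1\<close> by (auto simp: V_def)
      then have "y \<le> \<mu> k" using \<open>finite V\<close> by (simp add: y_def)
      then show False using \<open>\<mu> k < y\<close> by simp
    qed
  qed (use \<open>m < y\<close> in simp)
  then have "{k. \<mu> k = m} = {k. \<mu> k < y} - {k. \<mu> k < m}" by auto
  moreover have "{k. \<mu> k < m} \<subseteq> {k. \<mu> k < y}" using \<open>m < y\<close> by auto
  ultimately have "(\<Sum>k\<in>{k. \<mu> k = m}. w k) = (\<Sum>k\<in>{k. \<mu> k < y}. w k) - (\<Sum>k\<in>{k. \<mu> k < m}. w k)"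
    by (simp add: sum_diff fin)
  then have "norm (\<Sum>k\<in>{k. \<mu> k = m}. w k)
      \<le> norm (\<Sum>k\<in>{k. \<mu> k < y}. w k) + norm (\<Sum>k\<in>{k. \<mu> k < m}. w k)"
    by (simp add: norm_triangle_ineq4)
  then show ?thesis using bdd[of y] bdd[of m] by simp
qed

text \<open>The weighted sum regroups into level sets of \<open>\<mu>\<close>, each of which is the difference of two
  partial sums.\<close>

lemma norm_sum_level_weighted_le:
  fixes \<mu> :: "'i \<Rightarrow> real" and w :: "'i \<Rightarrow> 'a::real_normed_vector" and \<phi> :: "real \<Rightarrow> real"
  assumes fin: "\<And>x. finite {k. \<mu> k < x}"
    and bdd: "\<And>x. norm (\<Sum>k\<in>{k. \<mu> k < x}. w k) \<le> R"
  shows "norm (\<Sum>k\<in>{k. \<mu> k < x}. \<phi> (\<mu> k) *\<^sub>R w k) \<le> 2 * R * (\<Sum>k\<in>{k. \<mu> k < x}. \<bar>\<phi> (\<mu> k)\<bar>)"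
proof -
  let ?F = "{k. \<mu> k < x}"
  have "0 \<le> R" using bdd[of x] norm_ge_zero order_trans by blast
  have "(\<Sum>k\<in>?F. \<phi> (\<mu> k) *\<^sub>R w k) = (\<Sum>m\<in>\<mu> ` ?F. \<Sum>k\<in>{k\<in>?F. \<mu> k = m}. \<phi> (\<mu> k) *\<^sub>R w k)"
    by (rule sum.image_gen[OF fin])
  also have "\<dots> = (\<Sum>m\<in>\<mu> ` ?F. \<phi> m *\<^sub>R (\<Sum>k\<in>{k. \<mu> k = m}. w k))"
  proof (rule sum.cong[OF refl])
    fix m assume "m \<in> \<mu> ` ?F"
    then have "{k\<in>?F. \<mu> k = m} = {k. \<mu> k = m}" by auto
    then show "(\<Sum>k\<in>{k\<in>?F. \<mu> k = m}. \<phi> (\<mu> k) *\<^sub>R w k) = \<phi> m *\<^sub>R (\<Sum>k\<in>{k. \<mu> k = m}. w k)"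
      by (simp add: scaleR_sum_right)
  qed
  finally have "norm (\<Sum>k\<in>?F. \<phi> (\<mu> k) *\<^sub>R w k) \<le> (\<Sum>m\<in>\<mu> ` ?F. norm (\<phi> m *\<^sub>R (\<Sum>k\<in>{k. \<mu> k = m}. w k)))"
    by (simp only: norm_sum)
  also have "\<dots> = (\<Sum>m\<in>\<mu> ` ?F. \<bar>\<phi> m\<bar> * norm (\<Sum>k\<in>{k. \<mu> k = m}. w k))"
    by simp
  also have "\<dots> \<le> (\<Sum>m\<in>\<mu> ` ?F. \<bar>\<phi> m\<bar> * (2 * R))"
    by (intro sum_mono mult_left_mono norm_sum_level_set_le[OF fin bdd]) auto
  also have "\<dots> \<le> (\<Sum>k\<in>?F. \<bar>\<phi> (\<mu> k)\<bar> * (2 * R))"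
    using sum_image_le[OF fin, where g="\<lambda>m. \<bar>\<phi> m\<bar> * (2 * R)" and f=\<mu>] \<open>0 \<le> R\<close> by (simp add: comp_def)
  finally show ?thesis by (simp add: sum_distrib_left mult_ac)
qed

lemma AE_lebesgue_translate:
  assumes "AE t in lebesgue. P t"
  shows "AE t in lebesgue. P (t + c)"
proof -
  from assms obtain N where N: "N \<in> null_sets lebesgue" "{t. \<not> P t} \<subseteq> N"
    unfolding eventually_ae_filter by auto
  then have "negligible ((+) (- c) ` N)"
    by (intro negligible_translation) (simp add: negligible_iff_null_sets)
  moreover have "{t. \<not> P (t + c)} \<subseteq> (+) (- c) ` N"
    using N(2) by (auto simp: image_iff intro!: bexI[where x="_ + c"])
  ultimately show ?thesis
    unfolding eventually_ae_filter negligible_iff_null_sets by auto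
qed

lemma AE_lebesgue_ex_all_translates:
  assumes "AE t in lebesgue. P t"
  shows "\<exists>t. \<forall>n::int. P (t + of_int n * c)"
proof (rule eventually_happens')
  show "ae_filter lebesgue \<noteq> bot"
    by (simp add: ae_filter_eq_bot_iff)
  show "AE t in lebesgue. \<forall>n::int. P (t + of_int n * c)"
    unfolding AE_all_countable by (intro allI AE_lebesgue_translate[OF assms])
qed

lemma finite_abs_less_if_deviation_powr:
  fixes lam :: "int \<Rightarrow> real"
  assumes "0 \<le> \<alpha>"
    and dev: "\<And>n. \<bar>n\<bar> \<ge> N \<Longrightarrow> \<bar>lam n - of_int n\<bar> \<le> C * \<bar>of_int n\<bar> powr (- \<alpha>)"
  shows "finite {k. \<bar>lam k\<bar> < x}"
proof (rule finite_subset)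
  define B where "B = max N (max 1 \<lceil>\<bar>x\<bar> + \<bar>C\<bar>\<rceil>)"
  show "{k. \<bar>lam k\<bar> < x} \<subseteq> {-B..B}"
  proof safe
    fix k assume "\<bar>lam k\<bar> < x"
    have "\<bar>k\<bar> \<le> B"
    proof (cases "\<bar>k\<bar> \<ge> max N 1")
      case True
      then have "1 \<le> \<bar>real_of_int k\<bar>" by linarith
      then have "\<bar>of_int k\<bar> powr (- \<alpha>) \<le> 1"
        using ge_one_powr_ge_zero[of "\<bar>real_of_int k\<bar>" \<alpha>] \<open>0 \<le> \<alpha>\<close>
        by (simp add: powr_minus divide_simps)
      have "\<bar>lam k - of_int k\<bar> \<le> C * \<bar>of_int k\<bar> powr (- \<alpha>)"
        using dev[of k] True by simp
      also have "\<dots> \<le> \<bar>C\<bar> * \<bar>of_int k\<bar> powr (- \<alpha>)"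
        by (rule mult_right_mono) simp_all
      also have "\<dots> \<le> \<bar>C\<bar>"
        using \<open>\<bar>of_int k\<bar> powr (- \<alpha>) \<le> 1\<close> by (rule mult_left_le) simp
      finally have "\<bar>lam k - of_int k\<bar> \<le> \<bar>C\<bar>" .
      then have "\<bar>k\<bar> \<le> \<lceil>\<bar>x\<bar> + \<bar>C\<bar>\<rceil>"
        using \<open>\<bar>lam k\<bar> < x\<close> by linarith
      then show ?thesis by (simp add: B_def)
    qed (auto simp: B_def)
    then show "k \<in> {-B..B}" by auto
  qed
qed simp

lemma abs_two_cos_minus_two_le: "\<bar>2 * cos y - 2\<bar> \<le> (y::real)\<^sup>2"
proof -
  have "\<bar>2 * cos y - 2\<bar> = 4 * sin (y / 2) ^ 2"
    using cos_double_sin[of "y / 2"] by simp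
  also have "\<dots> \<le> 4 * (y / 2) ^ 2"
    using power_mono[OF abs_sin_x_le_abs_x[of "y / 2"], of 2] by (simp add: power_divide)
  finally show ?thesis by (simp add: power_divide)
qed

lemma abs_two_cos_2pi_int_minus_two_le:
  fixes h k :: int
  shows "\<bar>2 * cos (2 * pi * of_int h * l) - 2\<bar> \<le> (2 * pi * of_int h) ^ 2 * (l - of_int k) ^ 2"
proof -
  have "2 * pi * of_int h * l = 2 * pi * of_int h * (l - of_int k) + 2 * pi * of_int (h * k)"
    by (simp add: algebra_simps)
  then have "cos (2 * pi * of_int h * l) = cos (2 * pi * of_int h * (l - of_int k))"
    by (simp only: cos_add cos_int_2pin sin_int_2pin mult_1_right mult_zero_right diff_zero)
  then show ?thesis
    using abs_two_cos_minus_two_le[of "2 * pi * of_int h * (l - of_int k)"] by (simp add: power_mult_distrib)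
qed

lemma sum_abs_two_cos_2pi_int_minus_two_power_le:
  fixes h :: int and lam :: "int \<Rightarrow> real"
  shows "(\<Sum>k\<in>F. \<bar>2 * cos (2 * pi * of_int h * lam k) - 2\<bar> ^ J)
    \<le> (2 * pi * of_int h) ^ (2 * J) * (\<Sum>k\<in>F. (lam k - of_int k) ^ (2 * J))"
proof -
  have "\<bar>2 * cos (2 * pi * of_int h * lam k) - 2\<bar> ^ J \<le> ((2 * pi * of_int h) ^ 2 * (lam k - of_int k) ^ 2) ^ J" for k
    by (intro power_mono abs_two_cos_2pi_int_minus_two_le) simp
  also have "((2 * pi * of_int h) ^ 2 * (lam k - of_int k) ^ 2) ^ J
      = (2 * pi * of_int h) ^ (2 * J) * (lam k - of_int k) ^ (2 * J)" for k
    by (simp only: power_mult_distrib power_mult)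
  finally show ?thesis
    by (simp add: sum_distrib_left sum_mono)
qed

lemma sum_int_le_twice_suminf:
  fixes g :: "nat \<Rightarrow> real"
  assumes "finite F" "\<And>n. 0 \<le> g n" "summable g"
  shows "(\<Sum>k\<in>F. g (nat \<bar>k\<bar>)) \<le> 2 * suminf g"
proof -
  have half: "(\<Sum>k\<in>A. g (nat \<bar>k\<bar>)) \<le> suminf g"
    if "finite A" "inj_on (\<lambda>k. nat \<bar>k\<bar>) A" for A :: "int set"
  proof -
    have "(\<Sum>k\<in>A. g (nat \<bar>k\<bar>)) = sum g ((\<lambda>k. nat \<bar>k\<bar>) ` A)"
      using that by (simp add: sum.reindex)
    also have "\<dots> \<le> suminf g"
      using that assms by (intro sum_le_suminf) auto
    finally show ?thesis .
  qed
  have "(\<Sum>k\<in>F. g (nat \<bar>k\<bar>)) = (\<Sum>k\<in>{k\<in>F. 0 \<le> k}. g (nat \<bar>k\<bar>)) + (\<Sum>k\<in>{k\<in>F. k < 0}. g (nat \<bar>k\<bar>))"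
    using assms(1) by (subst sum.union_disjoint[symmetric]) (auto intro: sum.cong)
  also have "\<dots> \<le> suminf g + suminf g"
    using assms(1) by (intro add_mono half) (auto simp: inj_on_def)
  finally show ?thesis by simp
qed

lemma bounded_sums_if_powr_decay:
  fixes \<beta> :: "int \<Rightarrow> real"
  assumes nonneg: "\<And>k. 0 \<le> \<beta> k" and "1 < s"
    and decay: "\<And>k. \<bar>k\<bar> \<ge> N \<Longrightarrow> \<beta> k \<le> D * \<bar>of_int k\<bar> powr (- s)"
  obtains B where "\<And>F. finite F \<Longrightarrow> sum \<beta> F \<le> B"
proof
  define g where "g n = real n powr (- s)" for n
  have "summable g"
    unfolding g_def using \<open>1 < s\<close> by (simp add: summable_real_powr_iff)
  have "0 \<le> g n" for n
    by (simp add: g_def)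
  have "finite {k::int. \<bar>k\<bar> < N}"
    by (rule finite_subset[of _ "{-N..N}"]) auto
  fix F :: "int set" assume "finite F"
  have "\<beta> k \<le> (if \<bar>k\<bar> < N then \<beta> k else 0) + \<bar>D\<bar> * g (nat \<bar>k\<bar>)" for k
  proof (cases "\<bar>k\<bar> < N")
    case False
    then have "\<beta> k \<le> D * g (nat \<bar>k\<bar>)"
      using decay[of k] by (simp add: g_def)
    also have "\<dots> \<le> \<bar>D\<bar> * g (nat \<bar>k\<bar>)"
      using \<open>0 \<le> g (nat \<bar>k\<bar>)\<close> by (intro mult_right_mono) simp_all
    finally show ?thesis using False by simp
  qed (simp add: \<open>0 \<le> g (nat \<bar>k\<bar>)\<close>)
  then have "sum \<beta> F \<le> (\<Sum>k\<in>F. (if \<bar>k\<bar> < N then \<beta> k else 0) + \<bar>D\<bar> * g (nat \<bar>k\<bar>))"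
    by (rule sum_mono)
  also have "\<dots> = (\<Sum>k\<in>F \<inter> {k. \<bar>k\<bar> < N}. \<beta> k) + \<bar>D\<bar> * (\<Sum>k\<in>F. g (nat \<bar>k\<bar>))"
    using \<open>finite F\<close> by (simp add: sum.distrib sum_distrib_left sum.inter_restrict)
  also have "\<dots> \<le> (\<Sum>k\<in>{k. \<bar>k\<bar> < N}. \<beta> k) + \<bar>D\<bar> * (2 * suminf g)"
    using \<open>finite {k::int. \<bar>k\<bar> < N}\<close> \<open>finite F\<close> \<open>summable g\<close>
    by (intro add_mono sum_mono2 mult_left_mono sum_int_le_twice_suminf) (auto simp: nonneg \<open>\<And>n. 0 \<le> g n\<close>)
  finally show "sum \<beta> F \<le> (\<Sum>k\<in>{k. \<bar>k\<bar> < N}. \<beta> k) + \<bar>D\<bar> * (2 * suminf g)" .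
qed

lemma bounded_sums_deviation_power:
  fixes lam :: "int \<Rightarrow> real"
  assumes dev: "\<And>n. \<bar>n\<bar> \<ge> N \<Longrightarrow> \<bar>lam n - of_int n\<bar> \<le> C * \<bar>of_int n\<bar> powr (- \<alpha>)"
    and "1 < 2 * real J * \<alpha>"
  obtains B where "\<And>F. finite F \<Longrightarrow> (\<Sum>k\<in>F. (lam k - of_int k) ^ (2 * J)) \<le> B"
proof (rule bounded_sums_if_powr_decay[where \<beta>="\<lambda>k. (lam k - of_int k) ^ (2 * J)"
      and N="max N 1" and D="C ^ (2 * J)" and s="2 * real J * \<alpha>"])
  fix k :: int assume "\<bar>k\<bar> \<ge> max N 1"
  then have "\<bar>lam k - of_int k\<bar> \<le> C * \<bar>of_int k\<bar> powr (- \<alpha>)" "\<bar>of_int k\<bar> \<noteq> (0::real)"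
    using dev[of k] by auto
  have "(lam k - of_int k) ^ (2 * J) = \<bar>lam k - of_int k\<bar> ^ (2 * J)"
    by (simp add: power_even_abs)
  also have "\<dots> \<le> (C * \<bar>of_int k\<bar> powr (- \<alpha>)) ^ (2 * J)"
    using \<open>\<bar>lam k - of_int k\<bar> \<le> C * \<bar>of_int k\<bar> powr (- \<alpha>)\<close> by (rule power_mono) simp
  also have "\<dots> = C ^ (2 * J) * \<bar>of_int k\<bar> powr (- (2 * real J * \<alpha>))"
    using \<open>\<bar>of_int k\<bar> \<noteq> 0\<close> by (simp add: power_mult_distrib powr_power)
  finally show "(lam k - of_int k) ^ (2 * J) \<le> C ^ (2 * J) * \<bar>of_int k\<bar> powr (- (2 * real J * \<alpha>))" .
qed (use assms(2) that in auto)


lemma norm_iterated_second_difference_limit_le: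
  fixes lam :: "int \<Rightarrow> real" and c :: "int \<Rightarrow> complex" and g :: "real \<Rightarrow> complex"
  assumes S_def: "\<And>x s. S x s = (\<Sum>k\<in>{k. \<bar>lam k\<bar> < x}. c k * exp (\<i> * complex_of_real (lam k * s)))"
    and fin: "\<And>x. finite {k. \<bar>lam k\<bar> < x}"
    and lim: "\<And>n::int. ((\<lambda>x. S x (t + of_int n * a)) \<longlongrightarrow> g (t + of_int n * a)) at_top"
    and bdd: "\<And>x. norm (S x t) \<le> R"
    and eigenvalues: "\<And>F. finite F \<Longrightarrow> (\<Sum>k\<in>F. \<bar>2 * cos (a * lam k) - 2\<bar> ^ J) \<le> B"
  shows "norm ((second_difference a ^^ J) g t) \<le> 2 * R * B"
proof -
  define w where "w k s = c k * exp (\<i> * complex_of_real (lam k * s))" for k s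
  define \<phi> where "\<phi> m = (2 * cos (a * m) - 2) ^ J" for m
  have \<phi>_abs: "\<phi> \<bar>lam k\<bar> = (2 * cos (a * lam k) - 2) ^ J" for k
    by (cases "lam k \<ge> 0") (simp_all add: \<phi>_def)
  have "0 \<le> R"
    using bdd[of 0] norm_ge_zero order_trans by blast
  have "norm ((second_difference a ^^ J) (S x) t) \<le> 2 * R * B" for x
  proof -
    have "S x = (\<lambda>s. \<Sum>k\<in>{k. \<bar>lam k\<bar> < x}. w k s)"
      by (simp add: S_def w_def fun_eq_iff)
    moreover have "(second_difference a ^^ J) (w k) = (\<lambda>s. (2 * cos (a * lam k) - 2) ^ J *\<^sub>R w k s)" for k
      unfolding w_def by (rule iterated_second_difference_eigenfunction[OF second_difference_exp_imaginary])
    ultimately have "(second_difference a ^^ J) (S x) t = (\<Sum>k\<in>{k. \<bar>lam k\<bar> < x}. \<phi> \<bar>lam k\<bar> *\<^sub>R w k t)"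
      by (simp only: iterated_second_difference_sum \<phi>_abs)
    also have "norm \<dots> \<le> 2 * R * (\<Sum>k\<in>{k. \<bar>lam k\<bar> < x}. \<bar>\<phi> \<bar>lam k\<bar>\<bar>)"
      using fin bdd unfolding S_def w_def by (rule norm_sum_level_weighted_le)
    also have "\<dots> \<le> 2 * R * B"
      using eigenvalues[OF fin] \<open>0 \<le> R\<close> by (intro mult_left_mono) (simp_all add: \<phi>_abs power_abs)
    finally show ?thesis .
  qed
  moreover have "((\<lambda>x. (second_difference a ^^ J) (S x) t) \<longlongrightarrow> (second_difference a ^^ J) g t) at_top"
    using tendsto_iterated_second_difference[of S t a g at_top J 0] lim by simp
  ultimately show ?thesis
    by (intro tendsto_upperbound[OF tendsto_norm]) auto
qed

lemma filterlim_two_cosh_minus_two_over_square: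
  "filterlim (\<lambda>a::real. (2 * cosh a - 2) / a\<^sup>2) at_top at_top"
proof (rule filterlim_at_top_mono)
  have "((\<lambda>a::real. 2 * (a ^ 2 / exp a)) \<longlongrightarrow> 0) at_top"
    using tendsto_mult_right_zero[OF tendsto_power_div_exp_0[of 2]] by simp
  moreover have "eventually (\<lambda>a::real. 0 < 2 * (a ^ 2 / exp a)) at_top"
    using eventually_gt_at_top[of 0] by (rule eventually_mono) simp
  ultimately show "filterlim (\<lambda>a::real. inverse (2 * (a ^ 2 / exp a))) at_top at_top"
    by (rule filterlim_inverse_at_top)
  have bound: "inverse (2 * (a ^ 2 / exp a)) \<le> (2 * cosh a - 2) / a\<^sup>2" if "3 \<le> a" for a :: real
  proof -
    have "4 \<le> exp a"
      using exp_ge_add_one_self[of a] that by linarith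
    moreover have "2 * cosh a - 2 = exp a + exp (- a) - 2"
      by (simp add: cosh_def)
    ultimately have "exp a / 2 \<le> 2 * cosh a - 2"
      using exp_gt_zero[of "- a"] by linarith
    then show ?thesis
      using that by (simp add: field_simps divide_right_mono)
  qed
  show "eventually (\<lambda>a::real. inverse (2 * (a ^ 2 / exp a)) \<le> (2 * cosh a - 2) / a\<^sup>2) at_top"
    by (rule eventually_mono[OF eventually_ge_at_top[of 3] bound])
qed

lemma two_cosh_power_not_polynomially_bounded:
  assumes "0 < J" "0 < E"
  shows "\<not> (\<forall>h::nat. (2 * cosh (2 * pi * h) - 2) ^ J * E \<le> K * (2 * pi * h) ^ (2 * J))"
proof
  assume bounded: "\<forall>h::nat. (2 * cosh (2 * pi * h) - 2) ^ J * E \<le> K * (2 * pi * h) ^ (2 * J)"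
  have "filterlim (\<lambda>h::nat. 2 * pi * real h) at_top sequentially"
    by (rule filterlim_tendsto_pos_mult_at_top[OF tendsto_const _ filterlim_real_sequentially]) simp
  then have "filterlim (\<lambda>h::nat. ((2 * cosh (2 * pi * h) - 2) / (2 * pi * h)\<^sup>2) ^ J) at_top sequentially"
    by (intro filterlim_pow_at_top[OF \<open>0 < J\<close>] filterlim_compose[OF filterlim_two_cosh_minus_two_over_square])
  then have "eventually (\<lambda>h::nat. K / E < ((2 * cosh (2 * pi * h) - 2) / (2 * pi * h)\<^sup>2) ^ J) sequentially"
    by (simp add: filterlim_at_top_dense)
  moreover have "eventually (\<lambda>h::nat. 0 < h) sequentially"
    by (simp add: eventually_gt_at_top)
  ultimately obtain h :: nat where h: "K / E < ((2 * cosh (2 * pi * h) - 2) / (2 * pi * h)\<^sup>2) ^ J" "0 < h"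
    using eventually_happens'[OF sequentially_bot eventually_conj] by blast
  have "((2 * cosh (2 * pi * h) - 2) / (2 * pi * h)\<^sup>2) ^ J * E
      = (2 * cosh (2 * pi * h) - 2) ^ J * E / (2 * pi * h) ^ (2 * J)"
    by (simp add: power_divide power_mult)
  also have "\<dots> \<le> K"
    using bounded h(2) by (simp add: pos_divide_le_eq)
  finally have "((2 * cosh (2 * pi * h) - 2) / (2 * pi * h)\<^sup>2) ^ J * E \<le> K" .
  then show False
    using h(1) \<open>0 < E\<close> by (simp add: field_simps)
qed

lemma two_cosh_power_le_if_exp_expansion:
  fixes lam :: "int \<Rightarrow> real" and c :: "int \<Rightarrow> complex" and h :: nat
  assumes S_def: "\<And>x s. S x s = (\<Sum>k\<in>{k. \<bar>lam k\<bar> < x}. c k * exp (\<i> * complex_of_real (lam k * s)))"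
    and fin: "\<And>x. finite {k. \<bar>lam k\<bar> < x}"
    and lim: "\<And>n::int. ((\<lambda>x. S x (t + of_int n * (2 * pi))) \<longlongrightarrow> of_real (exp (t + of_int n * (2 * pi)))) at_top"
    and bdd: "\<And>x. norm (S x t) \<le> R"
    and deviation: "\<And>F. finite F \<Longrightarrow> (\<Sum>k\<in>F. (lam k - of_int k) ^ (2 * J)) \<le> B"
  shows "(2 * cosh (2 * pi * h) - 2) ^ J * exp t \<le> 2 * R * B * (2 * pi * h) ^ (2 * J)"
proof -
  define f :: "real \<Rightarrow> complex" where "f = (\<lambda>s. of_real (exp s))"
  have "norm ((second_difference (2 * pi * h) ^^ J) f t) \<le> 2 * R * ((2 * pi * h) ^ (2 * J) * B)"
  proof (rule norm_iterated_second_difference_limit_le[OF S_def fin _ bdd])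
    show "((\<lambda>x. S x (t + of_int n * (2 * pi * h))) \<longlongrightarrow> f (t + of_int n * (2 * pi * h))) at_top" for n :: int
      using lim[of "n * int h"] by (simp add: f_def mult_ac)
    fix F :: "int set" assume "finite F"
    have "(\<Sum>k\<in>F. \<bar>2 * cos (2 * pi * h * lam k) - 2\<bar> ^ J)
        \<le> (2 * pi * h) ^ (2 * J) * (\<Sum>k\<in>F. (lam k - of_int k) ^ (2 * J))"
      using sum_abs_two_cos_2pi_int_minus_two_power_le[of "int h" lam J F] by simp
    also have "\<dots> \<le> (2 * pi * h) ^ (2 * J) * B"
      using deviation[OF \<open>finite F\<close>] by (intro mult_left_mono) simp_all
    finally show "(\<Sum>k\<in>F. \<bar>2 * cos (2 * pi * h * lam k) - 2\<bar> ^ J) \<le> (2 * pi * h) ^ (2 * J) * B" .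
  qed
  moreover have "(second_difference (2 * pi * h) ^^ J) f t = (2 * cosh (2 * pi * h) - 2) ^ J *\<^sub>R f t"
    unfolding f_def by (simp only: iterated_second_difference_eigenfunction[OF second_difference_exp])
  moreover have "norm ((2 * cosh (2 * pi * h) - 2) ^ J *\<^sub>R f t) = (2 * cosh (2 * pi * h) - 2) ^ J * exp t"
    using cosh_real_ge_1[of "2 * pi * h"] by (simp add: f_def)
  ultimately show ?thesis
    by (simp add: ac_simps)
qed

theorem mainTheorem2:
  fixes \<alpha> :: real and lam :: "int \<Rightarrow> real"
  assumes "\<alpha> > 0"
    and "strict_mono lam"
    and "\<exists>C N. \<forall>n::int. \<bar>n\<bar> \<ge> N \<longrightarrow> \<bar>lam n - real_of_int n\<bar> \<le> C * \<bar>real_of_int n\<bar> powr (- \<alpha>)"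
  shows "\<not> menshov_spectrum lam"
proof
  assume "menshov_spectrum lam"
  obtain C N where dev: "\<And>n::int. \<bar>n\<bar> \<ge> N \<Longrightarrow> \<bar>lam n - real_of_int n\<bar> \<le> C * \<bar>real_of_int n\<bar> powr (- \<alpha>)"
    using assms(3) by blast
  have fin: "\<And>x. finite {k. \<bar>lam k\<bar> < x}"
    using finite_abs_less_if_deviation_powr[OF less_imp_le[OF \<open>\<alpha> > 0\<close>] dev] .
  obtain J :: nat where J: "1 < 2 * real J * \<alpha>"
    using ex_less_of_nat_mult[of "2 * \<alpha>" 1] \<open>\<alpha> > 0\<close> by (auto simp: ac_simps)
  then have "0 < J"
    by (cases "J = 0") auto
  obtain B where B: "\<And>F. finite F \<Longrightarrow> (\<Sum>k\<in>F. (lam k - of_int k) ^ (2 * J)) \<le> B"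
    using bounded_sums_deviation_power[where N=N and lam=lam and C=C and \<alpha>=\<alpha>, OF dev J] by blast
  have "(\<lambda>s. complex_of_real (exp s)) \<in> borel_measurable lebesgue"
    by (intro measurable_completion) simp
  then obtain c where "AE t in lebesgue. ((\<lambda>x. \<Sum>k\<in>{k. \<bar>lam k\<bar> < x}.
      c k * exp (\<i> * complex_of_real (lam k * t))) \<longlongrightarrow> complex_of_real (exp t)) at_top"
    using \<open>menshov_spectrum lam\<close> unfolding menshov_spectrum_def by blast
  moreover define S where "S x s = (\<Sum>k\<in>{k. \<bar>lam k\<bar> < x}. c k * exp (\<i> * complex_of_real (lam k * s)))" for x s
  ultimately obtain t where t: "\<And>n::int. ((\<lambda>x. S x (t + of_int n * (2 * pi)))
      \<longlongrightarrow> complex_of_real (exp (t + of_int n * (2 * pi)))) at_top"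
    using AE_lebesgue_ex_all_translates[of _ "2 * pi"] by (simp only: S_def) blast
  then obtain R where R: "\<And>x. norm (S x t) \<le> R"
    using partial_sums_bounded[OF fin, of _ "complex_of_real (exp t)"] t[of 0] unfolding S_def by auto
  have "\<forall>h::nat. (2 * cosh (2 * pi * h) - 2) ^ J * exp t \<le> 2 * R * B * (2 * pi * h) ^ (2 * J)"
    using two_cosh_power_le_if_exp_expansion[OF S_def fin t R B] by blast
  then show False
    using two_cosh_power_not_polynomially_bounded[OF \<open>0 < J\<close> exp_gt_zero] by blast
qed

end
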